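(* Let $b\ge0$, let $\nu_1,\nu_2>-1$ with $\nu_1-\nu_2=2\ell$ for some positive integer $\ell$, and let $0<a_1\le a_2$. Then the function $$\mu\mapsto\frac{Q_{\mu,\nu_1}(a_1,b)}{Q_{\mu,\nu_2}(a_2,b)}$$ is unimodal on $(0,\infty)$.
   Context: The Nuttall $Q$-function is $Q_{\mu,\nu}(a,b)=\int_b^\infty x^{\mu}e^{-(x^2+a^2)/2}I_\nu(ax)\,dx$ for $a>0$, $b\ge0$, $\nu>-1$, $\mu>0$, where $I_\nu$ is the modified Bessel function of the first kind. A function is unimodal if it changes its direction of monotonicity at most once (monotone functions included). *)

theory Defs
  imports "HOL-Analysis.Analysis"
begin

definition bessel_I :: "real \<Rightarrow> real \<Rightarrow> real" where
  "bessel_I nu x = (\<Sum>k. (x / 2) powr (2 * real k + nu) / (fact k * Gamma (real k + nu + 1)))"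

definition nuttall_Q :: "real \<Rightarrow> real \<Rightarrow> real \<Rightarrow> real \<Rightarrow> real" where
  "nuttall_Q mu nu a b =
     (LINT x:{b..}|lborel. x powr mu * exp (- (x\<^sup>2 + a\<^sup>2) / 2) * bessel_I nu (a * x))"

text \<open>Unimodal on S: changes direction of monotonicity at most once
  (monotone functions included, via a turning point c outside S).\<close>
definition unimodal_on :: "real set \<Rightarrow> (real \<Rightarrow> real) \<Rightarrow> bool" where
  "unimodal_on S f \<longleftrightarrow> (\<exists>c.
     (mono_on (S \<inter> {..c}) f \<and> antimono_on (S \<inter> {c..}) f) \<or>
     (antimono_on (S \<inter> {..c}) f \<and> mono_on (S \<inter> {c..}) f))"

end

(*
  Write F mu = Q_{mu,nu1}(a1,b) and G mu = Q_{mu,nu2}(a2,b). Both are convex, hence continuous,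
  in mu, and a continuous function f on (0,oo) with min (f x) (f z) <= f y for x < y < z is
  unimodal. If this failed for F/G at mu1 < mu2 < mu3, then for lam = F mu2 / G mu2 the transform
  T mu = F mu - lam * G mu = int_b^oo x^mu V(x) dx would be positive at mu1 and mu3 but zero at mu2.
  That is impossible when {x > 0. V x > 0} is an interval: some alpha, beta >= 0, not both zero,
  make alpha x^mu1 + beta x^mu3 - x^mu2 nonpositive exactly on that interval, and integrating
  against V gives alpha * T mu1 + beta * T mu3 <= T mu2.
  The interval property of V comes from V(x) = x^nu2 exp(-x^2/2) sum_m w_m x^(2m). Since
  nu1 - nu2 = 2l, the quotient of Bessel coefficients c_nu1(k) / c_nu2(k + l) has decreasing
  successive ratios, so the indices m with w_m > 0 are consecutive; the same kernel argument,
  applied to the power series in x^2, shows that its positivity set is an interval as well.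
*)
theory Submission
  imports Defs
begin

section \<open>Power series of the modified Bessel function\<close>

definition bessel_coeff :: "real \<Rightarrow> real \<Rightarrow> nat \<Rightarrow> real" where
  "bessel_coeff a nu k = (a / 2) powr (2 * real k + nu) / (fact k * Gamma (real k + nu + 1))"

definition bessel_series :: "real \<Rightarrow> real \<Rightarrow> real \<Rightarrow> real" where
  "bessel_series a nu y = (\<Sum>k. bessel_coeff a nu k * y ^ k)"

lemma bessel_coeff_pos: "a > 0 \<Longrightarrow> nu > -1 \<Longrightarrow> bessel_coeff a nu k > 0"
  by (simp add: bessel_coeff_def)

lemma bessel_coeff_Suc:
  assumes "a > 0" "nu > -1"
  shows "bessel_coeff a nu (Suc k) = bessel_coeff a nu k * (a / 2)\<^sup>2 / ((real k + 1) * (real k + nu + 1))"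
proof -
  have "(a / 2) powr (2 * real (Suc k) + nu) = (a / 2) powr (2 * real k + nu) * (a / 2) powr 2"
    by (simp add: powr_add [symmetric] algebra_simps)
  then have powr: "(a / 2) powr (2 * real (Suc k) + nu) = (a / 2) powr (2 * real k + nu) * (a / 2)\<^sup>2"
    using assms by (simp add: powr_numeral)
  have "real k + nu + 1 \<notin> \<int>\<^sub>\<le>\<^sub>0"
    using assms by (auto elim!: nonpos_Ints_cases)
  then have Gamma: "Gamma (real (Suc k) + nu + 1) = (real k + nu + 1) * Gamma (real k + nu + 1)"
    by (simp add: Gamma_plus1 [symmetric] add_ac)
  have "Gamma (real k + nu + 1) > 0" "real k + nu + 1 > 0"
    using assms by auto
  then show ?thesis
    unfolding bessel_coeff_def powr Gamma by (simp add: field_simps)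
qed

lemma bessel_coeff_le:
  assumes "a > 0" "nu > -1"
  shows "bessel_coeff a nu k \<le> bessel_coeff a nu 0 * ((a / 2)\<^sup>2 / min 1 (nu + 1)) ^ k / (fact k)\<^sup>2"
proof (induction k)
  case (Suc k)
  define d where "d = min 1 (nu + 1)"
  have d: "0 < d" "d \<le> 1" "d \<le> nu + 1" using assms by (auto simp: d_def)
  have "d * (real k + 1) \<le> real k + nu + 1"
    using d mult_right_mono [of d 1 "real k"] by (simp add: algebra_simps)
  then have denom: "d * (real k + 1)\<^sup>2 \<le> (real k + 1) * (real k + nu + 1)"
    using mult_left_mono [of "d * (real k + 1)" "real k + nu + 1" "real k + 1"]
    by (simp add: power2_eq_square mult_ac)
  have "bessel_coeff a nu (Suc k) = bessel_coeff a nu k * ((a / 2)\<^sup>2 / ((real k + 1) * (real k + nu + 1)))"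
    using bessel_coeff_Suc [OF assms] by simp
  also have "\<dots> \<le> bessel_coeff a nu k * ((a / 2)\<^sup>2 / (d * (real k + 1)\<^sup>2))"
    using assms d denom bessel_coeff_pos [OF assms, of k]
    by (intro mult_left_mono divide_left_mono) auto
  also have "\<dots> \<le> bessel_coeff a nu 0 * ((a / 2)\<^sup>2 / d) ^ k / (fact k)\<^sup>2 * ((a / 2)\<^sup>2 / (d * (real k + 1)\<^sup>2))"
    using Suc.IH d by (intro mult_right_mono) (auto simp: d_def)
  also have "\<dots> = bessel_coeff a nu 0 * ((a / 2)\<^sup>2 / d) ^ Suc k / (fact (Suc k))\<^sup>2"
    using d by (simp add: field_simps power2_eq_square)
  finally show ?case by (simp add: d_def)
qed simp

lemma power_div_fact_le_exp:
  fixes x :: real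
  assumes "x \<ge> 0"
  shows "x ^ n / fact n \<le> exp x"
proof -
  have "(\<Sum>i\<in>{n}. x ^ i /\<^sub>R fact i) \<le> (\<Sum>i. x ^ i /\<^sub>R fact i)"
    using assms by (intro sum_le_suminf summable_exp_generic) auto
  then show ?thesis by (simp add: exp_def divide_inverse mult.commute)
qed

lemma bessel_series_term_le:
  assumes "a > 0" "nu > -1"
  defines "K \<equiv> (a / 2)\<^sup>2 / min 1 (nu + 1)"
  shows "norm (bessel_coeff a nu k * y ^ k) \<le> bessel_coeff a nu 0 * exp (4 * K) * ((\<bar>y\<bar> / 4) ^ k / fact k)"
proof -
  have K: "K \<ge> 0" using assms by (simp add: K_def)
  have "norm (bessel_coeff a nu k * y ^ k) = bessel_coeff a nu k * \<bar>y\<bar> ^ k"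
    using bessel_coeff_pos [OF assms(1,2), of k] by (simp add: abs_mult power_abs)
  also have "\<dots> \<le> bessel_coeff a nu 0 * K ^ k / (fact k)\<^sup>2 * \<bar>y\<bar> ^ k"
    using bessel_coeff_le [OF assms(1,2)] by (intro mult_right_mono) (auto simp: K_def)
  also have "\<dots> = bessel_coeff a nu 0 * ((4 * K) ^ k / fact k) * ((\<bar>y\<bar> / 4) ^ k / fact k)"
    by (simp add: power_mult_distrib power_divide power2_eq_square field_simps)
  also have "\<dots> \<le> bessel_coeff a nu 0 * exp (4 * K) * ((\<bar>y\<bar> / 4) ^ k / fact k)"
    using K bessel_coeff_pos [OF assms(1,2), of 0]
    by (intro mult_right_mono mult_left_mono power_div_fact_le_exp) auto
  finally show ?thesis .
qed

lemma exp_series_sums: "(\<lambda>k. x ^ k / fact k) sums exp (x :: real)"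
  using exp_converges [of x] by (simp add: divide_inverse mult.commute)

lemma summable_bessel_series:
  assumes "a > 0" "nu > -1"
  shows "summable (\<lambda>k. bessel_coeff a nu k * y ^ k)"
  using bessel_series_term_le [OF assms]
  by (intro summable_comparison_test' [OF summable_mult [OF sums_summable [OF exp_series_sums]]])

lemma bessel_series_bound:
  assumes "a > 0" "nu > -1"
  obtains B where "B \<ge> 0" "\<And>y. \<bar>bessel_series a nu y\<bar> \<le> B * exp (\<bar>y\<bar> / 4)"
proof
  define B where "B = bessel_coeff a nu 0 * exp (4 * ((a / 2)\<^sup>2 / min 1 (nu + 1)))"
  show "B \<ge> 0"
    using bessel_coeff_pos [OF assms, of 0] by (simp add: B_def)
  fix y :: real
  have "norm (bessel_series a nu y) \<le> (\<Sum>k. B * ((\<bar>y\<bar> / 4) ^ k / fact k))"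
    unfolding bessel_series_def B_def using bessel_series_term_le [OF assms]
    by (intro norm_suminf_le summable_mult sums_summable [OF exp_series_sums])
  also have "\<dots> = B * exp (\<bar>y\<bar> / 4)"
    using sums_unique [OF sums_mult [OF exp_series_sums]] by simp
  finally show "\<bar>bessel_series a nu y\<bar> \<le> B * exp (\<bar>y\<bar> / 4)" by simp
qed

lemma bessel_series_pos:
  assumes "a > 0" "nu > -1" "y \<ge> 0"
  shows "bessel_series a nu y > 0"
  unfolding bessel_series_def
proof (rule suminf_pos2 [where i = 0])
  show "0 \<le> bessel_coeff a nu k * y ^ k" for k
    using bessel_coeff_pos [OF assms(1,2), of k] assms(3) by simp
qed (use summable_bessel_series [OF assms(1,2)] bessel_coeff_pos [OF assms(1,2)] in auto)

lemma bessel_I_scaled_eq: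
  assumes "a > 0" "nu > -1" "x > 0"
  shows "bessel_I nu (a * x) = x powr nu * bessel_series a nu (x\<^sup>2)"
proof -
  have "(a * x / 2) powr (2 * real k + nu) = (a / 2) powr (2 * real k + nu) * (x powr nu * (x\<^sup>2) ^ k)" for k
  proof -
    have "x powr (2 * real k + nu) = x powr nu * (x\<^sup>2) ^ k"
      using assms powr_realpow [of x "2 * k"] by (simp add: powr_add power_mult)
    then show ?thesis
      using assms powr_mult [of "a / 2" x "2 * real k + nu"] by simp
  qed
  then show ?thesis
    unfolding bessel_I_def bessel_series_def bessel_coeff_def
    using summable_bessel_series [OF assms(1,2), of "x\<^sup>2"]
    by (simp add: suminf_mult [symmetric] bessel_coeff_def mult_ac)
qed

lemma bessel_I_pos: "a > 0 \<Longrightarrow> nu > -1 \<Longrightarrow> x > 0 \<Longrightarrow> bessel_I nu (a * x) > 0"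
  by (simp add: bessel_I_scaled_eq bessel_series_pos)

section \<open>Exponential kernels\<close>

lemma convex_on_exp_scaled: "convex_on UNIV (\<lambda>t. exp (c * t :: real))"
proof (rule convex_onI)
  fix u x y :: real
  assume "0 < u" "u < 1"
  then show "exp (c * ((1 - u) *\<^sub>R x + u *\<^sub>R y)) \<le> (1 - u) * exp (c * x) + u * exp (c * y)"
    using convex_onD [OF exp_convex, of u "c * x" "c * y"] by (simp add: algebra_simps)
qed simp

lemma convex_on_powr_exponent: "z > 0 \<Longrightarrow> convex_on UNIV (\<lambda>mu. z powr mu)"
  using convex_on_exp_scaled [of "ln z"] by (simp add: powr_def mult.commute)

lemma convex_on_ge_outside:
  fixes f :: "real \<Rightarrow> real"
  assumes f: "convex_on UNIV f" and "p < q" "f p = f q" and t: "t \<le> p \<or> q \<le> t"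
  shows "f p \<le> f t"
proof (cases "t < p \<or> q < t")
  case True
  then show ?thesis
  proof
    assume "t < p"
    define \<theta> where "\<theta> = (p - t) / (q - t)"
    have \<theta>: "0 < \<theta>" "\<theta> < 1" and "\<theta> * (q - t) = p - t"
      using \<open>t < p\<close> \<open>p < q\<close> by (auto simp: \<theta>_def field_simps)
    then have "p = (1 - \<theta>) * t + \<theta> * q"
      by (simp add: algebra_simps)
    then have "f p \<le> (1 - \<theta>) * f t + \<theta> * f q"
      using convex_onD [OF f, of \<theta> t q] \<theta> by simp
    then have "(1 - \<theta>) * f p \<le> (1 - \<theta>) * f t"
      using \<open>f p = f q\<close> by (simp add: algebra_simps)
    then show ?thesis using \<theta> by simp
  next
    assume "q < t"
    define \<theta> where "\<theta> = (q - p) / (t - p)"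
    have \<theta>: "0 < \<theta>" "\<theta> < 1" and "\<theta> * (t - p) = q - p"
      using \<open>q < t\<close> \<open>p < q\<close> by (auto simp: \<theta>_def field_simps)
    then have "q = (1 - \<theta>) * p + \<theta> * t"
      by (simp add: algebra_simps)
    then have "f q \<le> (1 - \<theta>) * f p + \<theta> * f t"
      using convex_onD [OF f, of \<theta> p t] \<theta> by simp
    then have "\<theta> * f q \<le> \<theta> * f t"
      using \<open>f p = f q\<close> by (simp add: algebra_simps)
    then show ?thesis using \<theta> \<open>f p = f q\<close> by simp
  qed
qed (use t \<open>f p = f q\<close> in auto)

lemma exp_combination_tangent:
  fixes c1 c3 p :: real
  assumes "c1 < 0" "0 < c3"
  obtains \<alpha> \<beta> where "\<alpha> > 0" "\<beta> > 0" "\<alpha> * exp (c1 * p) + \<beta> * exp (c3 * p) = 1"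
    "\<And>t. 1 \<le> \<alpha> * exp (c1 * t) + \<beta> * exp (c3 * t)"
proof
  define w where "w = c3 / (c3 - c1)"
  have w: "0 < w" "w < 1" and "(1 - w) * c3 + w * c1 = 0"
    using assms by (auto simp: w_def field_simps)
  show "w * exp (- c1 * p) > 0" "(1 - w) * exp (- c3 * p) > 0"
    using w by simp_all
  show "w * exp (- c1 * p) * exp (c1 * p) + (1 - w) * exp (- c3 * p) * exp (c3 * p) = 1"
    by (simp add: mult.assoc flip: exp_add)
  fix t :: real
  text \<open>Jensen's inequality with weights \<open>1 - w\<close> and \<open>w\<close>, chosen so that the exponent vanishes.\<close>
  have "(1 - w) * (c3 * (t - p)) + w * (c1 * (t - p)) = ((1 - w) * c3 + w * c1) * (t - p)"
    by (simp add: algebra_simps)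
  then have "1 = exp ((1 - w) * (c3 * (t - p)) + w * (c1 * (t - p)))"
    using \<open>(1 - w) * c3 + w * c1 = 0\<close> by simp
  also have "\<dots> \<le> (1 - w) * exp (c3 * (t - p)) + w * exp (c1 * (t - p))"
    using convex_onD [OF exp_convex, of w "c3 * (t - p)" "c1 * (t - p)"] w by simp
  also have "\<dots> = w * exp (- c1 * p) * exp (c1 * t) + (1 - w) * exp (- c3 * p) * exp (c3 * t)"
    by (simp add: algebra_simps flip: exp_add)
  finally show "1 \<le> w * exp (- c1 * p) * exp (c1 * t) + (1 - w) * exp (- c3 * p) * exp (c3 * t)" .
qed

lemma exp_combination_chord:
  fixes c1 c3 p q :: real
  assumes "c1 < 0" "0 < c3" "p < q"
  obtains \<alpha> \<beta> where "\<alpha> > 0" "\<beta> > 0"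
    "\<And>t. p \<le> t \<Longrightarrow> t \<le> q \<Longrightarrow> \<alpha> * exp (c1 * t) + \<beta> * exp (c3 * t) \<le> 1"
    "\<And>t. t \<le> p \<or> q \<le> t \<Longrightarrow> 1 \<le> \<alpha> * exp (c1 * t) + \<beta> * exp (c3 * t)"
proof -
  define D where "D = exp (c1 * p) * exp (c3 * q) - exp (c1 * q) * exp (c3 * p)"
  have "exp (c1 * q) * exp (c3 * p) < exp (c1 * p) * exp (c3 * q)"
    using assms by (intro mult_strict_mono) auto
  then have "D > 0" by (simp add: D_def)
  define \<alpha> \<beta> where "\<alpha> = (exp (c3 * q) - exp (c3 * p)) / D" and "\<beta> = (exp (c1 * p) - exp (c1 * q)) / D"
  define g where "g t = \<alpha> * exp (c1 * t) + \<beta> * exp (c3 * t)" for t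
  have "\<alpha> > 0" "\<beta> > 0"
    using assms \<open>D > 0\<close> by (auto simp: \<alpha>_def \<beta>_def)
  then have convex: "convex_on UNIV g"
    unfolding g_def by (intro convex_on_add convex_on_cmul convex_on_exp_scaled) auto
  have "g p = ((exp (c3 * q) - exp (c3 * p)) * exp (c1 * p) + (exp (c1 * p) - exp (c1 * q)) * exp (c3 * p)) / D"
    "g q = ((exp (c3 * q) - exp (c3 * p)) * exp (c1 * q) + (exp (c1 * p) - exp (c1 * q)) * exp (c3 * q)) / D"
    by (simp_all add: g_def \<alpha>_def \<beta>_def add_divide_distrib)
  then have "g p = D / D" "g q = D / D"
    by (simp_all add: D_def algebra_simps)
  then have "g p = 1" "g q = 1"
    using \<open>D > 0\<close> by simp_all
  show ?thesis
  proof (rule that [OF \<open>\<alpha> > 0\<close> \<open>\<beta> > 0\<close>])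
    fix t assume "p \<le> t" "t \<le> q"
    then show "\<alpha> * exp (c1 * t) + \<beta> * exp (c3 * t) \<le> 1"
      using convex_on_le_max [OF convex_on_subset [OF convex], of p q t] \<open>g p = 1\<close> \<open>g q = 1\<close>
      by (simp add: g_def)
  next
    fix t assume "t \<le> p \<or> q \<le> t"
    then show "1 \<le> \<alpha> * exp (c1 * t) + \<beta> * exp (c3 * t)"
      using convex_on_ge_outside [OF convex \<open>p < q\<close>] \<open>g p = 1\<close> \<open>g q = 1\<close>
      by (simp add: g_def)
  qed
qed

lemma exp_combination_sign_pattern:
  fixes c1 c3 p q :: real
  assumes "c1 < 0" "0 < c3" "p \<le> q"
  obtains \<alpha> \<beta> where "\<alpha> > 0" "\<beta> > 0"
    "\<And>t. p \<le> t \<Longrightarrow> t \<le> q \<Longrightarrow> \<alpha> * exp (c1 * t) + \<beta> * exp (c3 * t) \<le> 1"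
    "\<And>t. t \<le> p \<or> q \<le> t \<Longrightarrow> 1 \<le> \<alpha> * exp (c1 * t) + \<beta> * exp (c3 * t)"
proof (cases "p = q")
  case True
  obtain \<alpha> \<beta> where "\<alpha> > 0" "\<beta> > 0" and at_p: "\<alpha> * exp (c1 * p) + \<beta> * exp (c3 * p) = 1"
    and ge: "\<And>t. 1 \<le> \<alpha> * exp (c1 * t) + \<beta> * exp (c3 * t)"
    by (fact exp_combination_tangent [OF assms(1,2)])
  show ?thesis
  proof (rule that [OF \<open>\<alpha> > 0\<close> \<open>\<beta> > 0\<close> _ ge])
    fix t assume "p \<le> t" "t \<le> q"
    then show "\<alpha> * exp (c1 * t) + \<beta> * exp (c3 * t) \<le> 1"
      using at_p True by simp
  qed
next
  case False
  then have "p < q"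
    using assms(3) by simp
  then show ?thesis
    by (rule exp_combination_chord [OF assms(1,2)]) (rule that)
qed

lemma is_interval_not_mem_cases:
  fixes P :: "real set"
  assumes "is_interval P" "t \<notin> P"
  shows "(\<forall>x\<in>P. t < x) \<or> (\<forall>x\<in>P. x < t)"
  using assms unfolding is_interval_1 by (meson not_le)

lemma is_interval_real_cases:
  fixes P :: "real set"
  assumes "is_interval P" "P \<noteq> UNIV"
  obtains (empty) "P = {}"
    | (above) p where "\<And>t. t \<in> P \<Longrightarrow> p \<le> t" "\<And>t. t \<notin> P \<Longrightarrow> t \<le> p"
    | (below) q where "\<And>t. t \<in> P \<Longrightarrow> t \<le> q" "\<And>t. t \<notin> P \<Longrightarrow> q \<le> t"
    | (bounded) p q where "p \<le> q" "\<And>t. t \<in> P \<Longrightarrow> p \<le> t \<and> t \<le> q"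
        "\<And>t. t \<notin> P \<Longrightarrow> t \<le> p \<or> q \<le> t"
proof (cases "P = {}")
  case False
  note cases = that
  have le_Inf: "t \<le> Inf P" if "\<forall>x\<in>P. t < x" for t
    using False that by (intro cInf_greatest) auto
  have Sup_le: "Sup P \<le> t" if "\<forall>x\<in>P. x < t" for t
    using False that by (intro cSup_least) auto
  note side = is_interval_not_mem_cases [OF assms(1)]
  obtain t0 where "t0 \<notin> P"
    using assms(2) by auto
  then have "bdd_below P \<or> bdd_above P"
    using side unfolding bdd_below_def bdd_above_def by (meson less_imp_le)
  moreover have thesis if "bdd_below P" "bdd_above P"
  proof (rule cases(4) [of "Inf P" "Sup P"])
    show "Inf P \<le> Sup P"
      using False \<open>bdd_above P\<close> \<open>bdd_below P\<close> by (rule cInf_le_cSup)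
    show "Inf P \<le> t \<and> t \<le> Sup P" if "t \<in> P" for t
      using cInf_lower [OF that] cSup_upper [OF that] \<open>bdd_below P\<close> \<open>bdd_above P\<close> by simp
    show "t \<le> Inf P \<or> Sup P \<le> t" if "t \<notin> P" for t
      using side [OF that] le_Inf Sup_le by blast
  qed
  moreover have thesis if "bdd_below P" "\<not> bdd_above P"
  proof (rule cases(2) [of "Inf P"])
    show "Inf P \<le> t" if "t \<in> P" for t
      using cInf_lower [OF that \<open>bdd_below P\<close>] .
    show "t \<le> Inf P" if "t \<notin> P" for t
      using side [OF that] le_Inf \<open>\<not> bdd_above P\<close> unfolding bdd_above_def by (meson less_imp_le)
  qed
  moreover have thesis if "\<not> bdd_below P" "bdd_above P"
  proof (rule cases(3) [of "Sup P"])
    show "t \<le> Sup P" if "t \<in> P" for t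
      using cSup_upper [OF that \<open>bdd_above P\<close>] .
    show "Sup P \<le> t" if "t \<notin> P" for t
      using side [OF that] Sup_le \<open>\<not> bdd_below P\<close> unfolding bdd_below_def by (meson less_imp_le)
  qed
  ultimately show thesis
    by (cases "bdd_below P"; cases "bdd_above P") simp_all
qed (rule that(1))

lemma exp_ray_kernel:
  fixes s1 s2 p t :: real
  assumes "s1 < s2"
  shows "p \<le> t \<Longrightarrow> exp ((s2 - s1) * p) * exp (s1 * t) \<le> exp (s2 * t)"
    and "t \<le> p \<Longrightarrow> exp (s2 * t) \<le> exp ((s2 - s1) * p) * exp (s1 * t)"
proof -
  have "exp ((s2 - s1) * p) * exp (s1 * t) = exp (s2 * t) * exp ((s2 - s1) * (p - t))"
    by (simp flip: exp_add) (simp add: algebra_simps)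
  then show "p \<le> t \<Longrightarrow> exp ((s2 - s1) * p) * exp (s1 * t) \<le> exp (s2 * t)"
    and "t \<le> p \<Longrightarrow> exp (s2 * t) \<le> exp ((s2 - s1) * p) * exp (s1 * t)"
    using assms by (simp_all add: mult_nonneg_nonpos)
qed

lemma exp_combination_separates_interval:
  fixes s1 s2 s3 :: real and P :: "real set"
  assumes s: "s1 < s2" "s2 < s3" and P: "is_interval P" "P \<noteq> UNIV"
  obtains \<alpha> \<beta> where "\<alpha> \<ge> 0" "\<beta> \<ge> 0" "\<alpha> + \<beta> > 0"
    "\<And>t. t \<in> P \<Longrightarrow> \<alpha> * exp (s1 * t) + \<beta> * exp (s3 * t) \<le> exp (s2 * t)"
    "\<And>t. t \<notin> P \<Longrightarrow> exp (s2 * t) \<le> \<alpha> * exp (s1 * t) + \<beta> * exp (s3 * t)"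
proof -
  have s': "s1 - s2 < 0" "0 < s3 - s2"
    using s by simp_all
  have scale: "\<alpha> * exp (s1 * t) + \<beta> * exp (s3 * t)
      = exp (s2 * t) * (\<alpha> * exp ((s1 - s2) * t) + \<beta> * exp ((s3 - s2) * t))" for \<alpha> \<beta> t
    by (simp add: distrib_left mult.left_commute flip: exp_add) (simp add: algebra_simps)
  from P show ?thesis
  proof (cases rule: is_interval_real_cases)
    case empty
    obtain \<alpha> \<beta> where "\<alpha> > 0" "\<beta> > 0" "\<And>t. 1 \<le> \<alpha> * exp ((s1 - s2) * t) + \<beta> * exp ((s3 - s2) * t)"
      using exp_combination_tangent [OF s'] by metis
    then show ?thesis
      using that [of \<alpha> \<beta>] empty by (simp add: scale)
  next
    case (above p)
    show ?thesis
      by (rule that [of "exp ((s2 - s1) * p)" 0]) (use above exp_ray_kernel [OF s(1)] in auto)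
  next
    case (below q)
    text \<open>Reflect \<open>t \<mapsto> -t\<close>: the kernel of a ray bounded above is that of a ray bounded below.\<close>
    have "exp ((s2 - s3) * q) * exp (s3 * t) \<le> exp (s2 * t)" if "t \<le> q" for t
      using exp_ray_kernel(1) [of "- s3" "- s2" "- q" "- t"] s that by (simp add: algebra_simps)
    moreover have "exp (s2 * t) \<le> exp ((s2 - s3) * q) * exp (s3 * t)" if "q \<le> t" for t
      using exp_ray_kernel(2) [of "- s3" "- s2" "- t" "- q"] s that by (simp add: algebra_simps)
    ultimately show ?thesis
      by (intro that [of 0 "exp ((s2 - s3) * q)"]) (use below in auto)
  next
    case (bounded p q)
    obtain \<alpha> \<beta> where "\<alpha> > 0" "\<beta> > 0"
      and le: "\<And>t. p \<le> t \<Longrightarrow> t \<le> q \<Longrightarrow> \<alpha> * exp ((s1 - s2) * t) + \<beta> * exp ((s3 - s2) * t) \<le> 1"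
      and ge: "\<And>t. t \<le> p \<or> q \<le> t \<Longrightarrow> 1 \<le> \<alpha> * exp ((s1 - s2) * t) + \<beta> * exp ((s3 - s2) * t)"
      by (fact exp_combination_sign_pattern [OF s' \<open>p \<le> q\<close>])
    show ?thesis
    proof (rule that [of \<alpha> \<beta>])
      fix t assume "t \<in> P"
      then show "\<alpha> * exp (s1 * t) + \<beta> * exp (s3 * t) \<le> exp (s2 * t)"
        unfolding scale using le bounded by (simp add: mult_le_cancel_left1)
    next
      fix t assume "t \<notin> P"
      then show "exp (s2 * t) \<le> \<alpha> * exp (s1 * t) + \<beta> * exp (s3 * t)"
        unfolding scale using ge bounded by (simp add: mult_le_cancel_left1)
    qed (use \<open>\<alpha> > 0\<close> \<open>\<beta> > 0\<close> in auto)
  qed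
qed

lemma exp_combination_sign_weighted:
  fixes s1 s2 s3 :: real and P :: "real set"
  assumes "s1 < s2" "s2 < s3" "is_interval P" "P \<noteq> UNIV"
  obtains \<alpha> \<beta> where "\<alpha> \<ge> 0" "\<beta> \<ge> 0" "\<alpha> + \<beta> > 0"
    "\<And>t v. (0 < v \<longleftrightarrow> t \<in> P) \<Longrightarrow> \<alpha> * (exp (s1 * t) * v) + \<beta> * (exp (s3 * t) * v) \<le> exp (s2 * t) * v"
proof -
  obtain \<alpha> \<beta> where "\<alpha> \<ge> 0" "\<beta> \<ge> 0" "\<alpha> + \<beta> > 0"
    and le: "\<And>t. t \<in> P \<Longrightarrow> \<alpha> * exp (s1 * t) + \<beta> * exp (s3 * t) \<le> exp (s2 * t)"
    and ge: "\<And>t. t \<notin> P \<Longrightarrow> exp (s2 * t) \<le> \<alpha> * exp (s1 * t) + \<beta> * exp (s3 * t)"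
    by (fact exp_combination_separates_interval [OF assms])
  have "(\<alpha> * exp (s1 * t) + \<beta> * exp (s3 * t)) * v \<le> exp (s2 * t) * v" if "0 < v \<longleftrightarrow> t \<in> P" for t v
    using le [of t] ge [of t] that by (cases "0 < v") (auto intro: mult_right_mono mult_right_mono_neg)
  then show ?thesis
    using that \<open>\<alpha> \<ge> 0\<close> \<open>\<beta> \<ge> 0\<close> \<open>\<alpha> + \<beta> > 0\<close> by (simp add: algebra_simps)
qed

section \<open>Positive transforms of weights with an interval of positivity\<close>

lemma suminf_power_pos_between:
  fixes w :: "nat \<Rightarrow> real"
  assumes summable: "\<And>y. y > 0 \<Longrightarrow> summable (\<lambda>m. w m * y ^ m)"
    and interval: "\<And>i j k. i \<le> j \<Longrightarrow> j \<le> k \<Longrightarrow> w i > 0 \<Longrightarrow> w k > 0 \<Longrightarrow> w j > 0"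
    and y: "0 < y1" "y1 < y2" "y2 < y3"
    and pos: "(\<Sum>m. w m * y1 ^ m) > 0" "(\<Sum>m. w m * y3 ^ m) > 0"
  shows "(\<Sum>m. w m * y2 ^ m) > 0"
proof -
  define P where "P = {t. \<exists>i j. w i > 0 \<and> w j > 0 \<and> real i \<le> t \<and> t \<le> real j}"
  have "is_interval P"
    unfolding is_interval_1 P_def by (auto intro: order.trans)
  moreover have "-1 \<notin> P"
    unfolding P_def by (auto dest: order.trans [of _ _ "-1 :: real"])
  moreover have "ln y1 < ln y2" "ln y2 < ln y3"
    using y by simp_all
  ultimately obtain \<alpha> \<beta> where "\<alpha> \<ge> 0" "\<beta> \<ge> 0" "\<alpha> + \<beta> > 0"
    and kernel: "\<And>t v. (0 < v \<longleftrightarrow> t \<in> P) \<Longrightarrow>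
      \<alpha> * (exp (ln y1 * t) * v) + \<beta> * (exp (ln y3 * t) * v) \<le> exp (ln y2 * t) * v"
    using exp_combination_sign_weighted [of "ln y1" "ln y2" "ln y3" P] by blast
  have mem: "real m \<in> P \<longleftrightarrow> w m > 0" for m
  proof
    assume "real m \<in> P"
    then obtain i j where "w i > 0" "w j > 0" "i \<le> m" "m \<le> j"
      unfolding P_def by auto
    then show "w m > 0" using interval by blast
  qed (auto simp: P_def)
  have power: "exp (ln y * real m) = y ^ m" if "y > 0" for y :: real and m
    using that powr_realpow [of y m] by (simp add: powr_def mult.commute)
  have pointwise: "\<alpha> * (w m * y1 ^ m) + \<beta> * (w m * y3 ^ m) \<le> w m * y2 ^ m" for m
    using kernel [where t = "real m" and v = "w m"] mem [of m] y by (simp add: power) (simp add: mult.commute)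
  have S: "summable (\<lambda>m. w m * y1 ^ m)" "summable (\<lambda>m. w m * y2 ^ m)" "summable (\<lambda>m. w m * y3 ^ m)"
    using summable y by simp_all
  have "(\<lambda>m. \<alpha> * (w m * y1 ^ m) + \<beta> * (w m * y3 ^ m))
      sums (\<alpha> * (\<Sum>m. w m * y1 ^ m) + \<beta> * (\<Sum>m. w m * y3 ^ m))"
    using S by (intro sums_add sums_mult summable_sums)
  then have "\<alpha> * (\<Sum>m. w m * y1 ^ m) + \<beta> * (\<Sum>m. w m * y3 ^ m) \<le> (\<Sum>m. w m * y2 ^ m)"
    using summable_sums [OF S(2)] by (rule sums_le [rotated]) (rule pointwise)
  moreover have "\<alpha> * (\<Sum>m. w m * y1 ^ m) + \<beta> * (\<Sum>m. w m * y3 ^ m) > 0"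
    using \<open>\<alpha> \<ge> 0\<close> \<open>\<beta> \<ge> 0\<close> \<open>\<alpha> + \<beta> > 0\<close> pos
    by (cases "\<alpha> = 0") (auto intro: add_pos_nonneg)
  ultimately show ?thesis by simp
qed

lemma set_integral_pos:
  fixes f :: "real \<Rightarrow> real"
  assumes "set_integrable lborel {b..} f"
    and "\<And>x. x \<ge> b \<Longrightarrow> f x \<ge> 0" and "\<And>x. x > b \<Longrightarrow> f x > 0"
  shows "(LINT x:{b..}|lborel. f x) > 0"
proof -
  let ?g = "\<lambda>x. indicator {b..} x *\<^sub>R f x"
  have g: "integrable lborel ?g" "AE x in lborel. 0 \<le> ?g x"
    using assms(1,2) by (auto simp: set_integrable_def indicator_def)
  have "integral\<^sup>L lborel ?g \<noteq> 0"
  proof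
    assume "integral\<^sup>L lborel ?g = 0"
    then have "AE x in lborel. ?g x = 0"
      using integral_nonneg_eq_0_iff_AE [OF g] by simp
    then have "AE x in lborel. x \<notin> {b<..<b + 1}"
      by eventually_elim (use assms(3) in \<open>force simp: indicator_def\<close>)
    then have "emeasure lborel {b<..<b + 1} = 0"
      by (subst (asm) AE_iff_measurable [of "{b<..<b + 1}"]) auto
    then show False by simp
  qed
  then show ?thesis
    using integral_nonneg_AE [OF g(2)] by (simp add: set_lebesgue_integral_def)
qed

lemma set_integral_powr_pos:
  fixes V :: "real \<Rightarrow> real"
  assumes "b \<ge> 0" "set_integrable lborel {b..} (\<lambda>x. x powr mu * V x)" "\<And>x. x > 0 \<Longrightarrow> V x > 0"
  shows "(LINT x:{b..}|lborel. x powr mu * V x) > 0"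
proof (rule set_integral_pos [OF assms(2)])
  show "x powr mu * V x \<ge> 0" if "x \<ge> b" for x
    using assms(1) assms(3) [of x] that by (cases "x = 0") auto
  show "x powr mu * V x > 0" if "x > b" for x
    using assms(1) assms(3) [of x] that by simp
qed

lemma set_integral_powr_pos_between:
  fixes V :: "real \<Rightarrow> real"
  assumes "b \<ge> 0"
    and int: "\<And>mu. mu \<in> {mu1, mu2, mu3} \<Longrightarrow> set_integrable lborel {b..} (\<lambda>x. x powr mu * V x)"
    and interval: "\<And>x1 x x2. 0 < x1 \<Longrightarrow> x1 \<le> x \<Longrightarrow> x \<le> x2 \<Longrightarrow> V x1 > 0 \<Longrightarrow> V x2 > 0 \<Longrightarrow> V x > 0"
    and mu: "mu1 < mu2" "mu2 < mu3"
    and pos: "(LINT x:{b..}|lborel. x powr mu1 * V x) > 0" "(LINT x:{b..}|lborel. x powr mu3 * V x) > 0"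
  shows "(LINT x:{b..}|lborel. x powr mu2 * V x) > 0"
proof -
  let ?I = "\<lambda>mu. LINT x:{b..}|lborel. x powr mu * V x"
  define P where "P = {t. V (exp t) > 0}"
  have mem: "ln x \<in> P \<longleftrightarrow> V x > 0" if "x > 0" for x
    using that by (simp add: P_def)
  have "is_interval P"
    unfolding is_interval_1
  proof (intro ballI allI impI)
    fix s u t assume "s \<in> P" "u \<in> P" "s \<le> t \<and> t \<le> u"
    then show "t \<in> P"
      using interval [of "exp s" "exp t" "exp u"] by (simp add: P_def)
  qed
  show ?thesis
  proof (cases "P = UNIV")
    case True
    then show ?thesis
      using mem int [of mu2] \<open>b \<ge> 0\<close> by (intro set_integral_powr_pos) auto
  next
    case False
    obtain \<alpha> \<beta> where "\<alpha> \<ge> 0" "\<beta> \<ge> 0" "\<alpha> + \<beta> > 0"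
      and kernel: "\<And>t v. (0 < v \<longleftrightarrow> t \<in> P) \<Longrightarrow>
        \<alpha> * (exp (mu1 * t) * v) + \<beta> * (exp (mu3 * t) * v) \<le> exp (mu2 * t) * v"
      by (fact exp_combination_sign_weighted [OF mu \<open>is_interval P\<close> False])
    have power: "exp (mu * ln x) = x powr mu" if "x > 0" for x mu :: real
      using that by (simp add: powr_def mult.commute)
    text \<open>At \<open>x = 0\<close> all three integrands vanish, since \<open>0 powr mu = 0\<close> for every \<open>mu\<close>.\<close>
    have pointwise: "\<alpha> * (x powr mu1 * V x) + \<beta> * (x powr mu3 * V x) \<le> x powr mu2 * V x"
      if "x \<in> {b..}" for x
      using kernel [where t = "ln x" and v = "V x"] mem [of x] that \<open>b \<ge> 0\<close>
      by (cases "x = 0") (simp_all add: power)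
    have "(LINT x:{b..}|lborel. \<alpha> * (x powr mu1 * V x) + \<beta> * (x powr mu3 * V x))
        \<le> (LINT x:{b..}|lborel. x powr mu2 * V x)"
      using int pointwise by (intro set_integral_mono set_integral_add set_integrable_mult_right) auto
    then have "\<alpha> * ?I mu1 + \<beta> * ?I mu3 \<le> ?I mu2"
      using int by (simp add: set_integral_add set_integrable_mult_right)
    moreover have "\<alpha> * ?I mu1 + \<beta> * ?I mu3 > 0"
      using \<open>\<alpha> \<ge> 0\<close> \<open>\<beta> \<ge> 0\<close> \<open>\<alpha> + \<beta> > 0\<close> pos
      by (cases "\<alpha> = 0") (auto intro: add_pos_nonneg)
    ultimately show ?thesis by simp
  qed
qed

section \<open>The Nuttall integrand\<close>

definition nuttall_integrand :: "real \<Rightarrow> real \<Rightarrow> real \<Rightarrow> real \<Rightarrow> real" where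
  "nuttall_integrand mu nu a x = x powr mu * exp (- (x\<^sup>2 + a\<^sup>2) / 2) * bessel_I nu (a * x)"

lemma nuttall_Q_eq_integral: "nuttall_Q mu nu a b = (LINT x:{b..}|lborel. nuttall_integrand mu nu a x)"
  by (simp add: nuttall_Q_def nuttall_integrand_def)

lemma borel_measurable_nuttall_integrand [measurable]:
  "nuttall_integrand mu nu a \<in> borel_measurable borel"
  unfolding nuttall_integrand_def bessel_I_def by measurable

lemma nuttall_integrand_pos:
  "a > 0 \<Longrightarrow> nu > -1 \<Longrightarrow> x > 0 \<Longrightarrow> nuttall_integrand mu nu a x > 0"
  by (simp add: nuttall_integrand_def bessel_I_pos)

lemma nuttall_integrand_nonneg:
  assumes "a > 0" "nu > -1" "x \<ge> 0"
  shows "nuttall_integrand mu nu a x \<ge> 0"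
  using nuttall_integrand_pos [OF assms(1,2)] assms(3)
  by (cases "x = 0") (auto simp: nuttall_integrand_def intro: less_imp_le)

lemma exp_neg_quarter_square_le: "exp (- (x\<^sup>2) / 4) \<le> exp 1 / exp (x :: real)"
proof -
  have "- (x\<^sup>2) / 4 \<le> 1 - x"
    using zero_le_power2 [of "x / 2 - 1"] by (simp add: power2_eq_square field_simps)
  then show ?thesis by (simp add: exp_diff [symmetric])
qed

lemma nuttall_integrand_le:
  assumes "a > 0" "nu > -1"
  obtains B where "B \<ge> 0" "\<And>x. x > 0 \<Longrightarrow> nuttall_integrand mu nu a x \<le> B * (x powr (mu + nu) / exp x)"
proof -
  obtain C where "C \<ge> 0" and C: "\<And>y. \<bar>bessel_series a nu y\<bar> \<le> C * exp (\<bar>y\<bar> / 4)"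
    using bessel_series_bound [OF assms] by blast
  have "nuttall_integrand mu nu a x \<le> (C * exp 1) * (x powr (mu + nu) / exp x)" if x: "x > 0" for x
  proof -
    have "nuttall_integrand mu nu a x = x powr (mu + nu) * exp (- (x\<^sup>2 + a\<^sup>2) / 2) * bessel_series a nu (x\<^sup>2)"
      using assms x by (simp add: nuttall_integrand_def bessel_I_scaled_eq powr_add)
    also have "\<dots> \<le> x powr (mu + nu) * exp (- (x\<^sup>2) / 2) * (C * exp (x\<^sup>2 / 4))"
      using C [of "x\<^sup>2"] bessel_series_pos [OF assms, of "x\<^sup>2"]
      by (intro mult_mono mult_left_mono) auto
    also have "\<dots> = C * (x powr (mu + nu) * exp (- (x\<^sup>2) / 4))"
      by (simp add: mult_ac exp_add [symmetric])
    also have "\<dots> \<le> C * (x powr (mu + nu) * (exp 1 / exp x))"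
      using \<open>C \<ge> 0\<close> exp_neg_quarter_square_le [of x] by (intro mult_left_mono) auto
    finally show ?thesis by (simp add: mult_ac)
  qed
  moreover have "C * exp 1 \<ge> 0"
    using \<open>C \<ge> 0\<close> by simp
  ultimately show ?thesis
    using that by blast
qed

lemma set_integrable_Gamma_integrand:
  assumes "s > (0::real)"
  shows "set_integrable lborel {0..} (\<lambda>t. t powr (s - 1) / exp t)"
proof -
  have "(\<lambda>t. t powr (s - 1) / exp t) absolutely_integrable_on {0..}"
    using Gamma_integral_real [OF assms] by (subst absolutely_integrable_on_iff_nonneg) auto
  then show ?thesis
    unfolding set_integrable_def by (subst (asm) integrable_completion) auto
qed

lemma set_integrable_nuttall_integrand:
  assumes "a > 0" "nu > -1" "mu + nu > -1" "b \<ge> 0"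
  shows "set_integrable lborel {b..} (nuttall_integrand mu nu a)"
proof -
  obtain B where "B \<ge> 0" and B: "\<And>x. x > 0 \<Longrightarrow> nuttall_integrand mu nu a x \<le> B * (x powr (mu + nu) / exp x)"
    using nuttall_integrand_le [OF assms(1,2)] by blast
  have "set_integrable lborel {0..} (\<lambda>x. B * (x powr ((mu + nu + 1) - 1) / exp x))"
    using assms(3) by (intro set_integrable_mult_right set_integrable_Gamma_integrand) auto
  then have "set_integrable lborel {0..} (\<lambda>x. B * (x powr (mu + nu) / exp x))"
    by simp
  then show ?thesis
    unfolding set_integrable_def
  proof (rule Bochner_Integration.integrable_bound [OF _ _ AE_I2])
    fix x :: real
    show "norm (indicator {b..} x *\<^sub>R nuttall_integrand mu nu a x)
      \<le> norm (indicator {0..} x *\<^sub>R (B * (x powr (mu + nu) / exp x)))"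
      using B [of x] \<open>B \<ge> 0\<close> nuttall_integrand_nonneg [OF assms(1,2), of x] assms(4)
      by (cases "x = 0"; cases "x \<ge> b") (auto simp: indicator_def nuttall_integrand_def)
  qed simp
qed

lemma nuttall_Q_pos:
  assumes "a > 0" "nu > -1" "mu + nu > -1" "b \<ge> 0"
  shows "nuttall_Q mu nu a b > 0"
  unfolding nuttall_Q_eq_integral
  using set_integrable_nuttall_integrand [OF assms] nuttall_integrand_nonneg [OF assms(1,2)]
    nuttall_integrand_pos [OF assms(1,2)] assms(4)
  by (intro set_integral_pos) auto

lemma convex_on_nuttall_Q:
  assumes "a > 0" "nu > -1" "b \<ge> 0"
  shows "convex_on {-(nu + 1)<..} (\<lambda>mu. nuttall_Q mu nu a b)"
proof (rule convex_onI)
  fix t x y :: real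
  assume t: "0 < t" "t < 1" and xy: "x \<in> {-(nu + 1)<..}" "y \<in> {-(nu + 1)<..}"
  have "(1 - t) * (x + nu + 1) > 0" "t * (y + nu + 1) > 0"
    using t xy by simp_all
  then have "(1 - t) * x + t * y + nu > -1"
    by (simp add: algebra_simps)
  then have int: "set_integrable lborel {b..} (nuttall_integrand m nu a)"
    if "m \<in> {x, y, (1 - t) * x + t * y}" for m
    using that xy set_integrable_nuttall_integrand [OF assms(1,2) _ assms(3)] by auto
  have pointwise: "nuttall_integrand ((1 - t) * x + t * y) nu a z
      \<le> (1 - t) * nuttall_integrand x nu a z + t * nuttall_integrand y nu a z" if "z \<ge> b" for z
  proof (cases "z = 0")
    case False
    then have z: "z > 0" using that assms(3) by simp
    define K where "K = exp (- (z\<^sup>2 + a\<^sup>2) / 2) * bessel_I nu (a * z)"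
    have "K \<ge> 0"
      using bessel_I_pos [OF assms(1,2) z] by (simp add: K_def)
    have "nuttall_integrand m nu a z = z powr m * K" for m
      by (simp add: nuttall_integrand_def K_def mult.assoc)
    then show ?thesis
      using mult_right_mono [OF convex_onD [OF convex_on_powr_exponent [OF z], of t x y] \<open>K \<ge> 0\<close>] t
      by (simp add: algebra_simps)
  qed (simp add: nuttall_integrand_def)
  have "(LINT z:{b..}|lborel. nuttall_integrand ((1 - t) * x + t * y) nu a z)
      \<le> (LINT z:{b..}|lborel. (1 - t) * nuttall_integrand x nu a z + t * nuttall_integrand y nu a z)"
    using int pointwise by (intro set_integral_mono set_integral_add set_integrable_mult_right) auto
  also have "\<dots> = (1 - t) * (LINT z:{b..}|lborel. nuttall_integrand x nu a z)
      + t * (LINT z:{b..}|lborel. nuttall_integrand y nu a z)"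
    using int by (simp add: set_integral_add set_integrable_mult_right)
  finally show "nuttall_Q ((1 - t) *\<^sub>R x + t *\<^sub>R y) nu a b \<le> (1 - t) * nuttall_Q x nu a b + t * nuttall_Q y nu a b"
    by (simp add: nuttall_Q_eq_integral)
qed (rule convex_real_interval)

lemma continuous_on_nuttall_Q:
  assumes "a > 0" "nu > -1" "b \<ge> 0"
  shows "continuous_on {-(nu + 1)<..} (\<lambda>mu. nuttall_Q mu nu a b)"
  using convex_on_continuous [OF open_greaterThan convex_on_nuttall_Q [OF assms]] .

section \<open>Sign pattern of a difference of Bessel functions\<close>

lemma min_le_if_ratio_antimono:
  fixes u :: "nat \<Rightarrow> real"
  assumes pos: "\<And>m. u m > 0"
    and ratio: "\<And>m n. m \<le> n \<Longrightarrow> u (Suc n) / u n \<le> u (Suc m) / u m"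
    and "i \<le> j" "j \<le> k"
  shows "min (u i) (u k) \<le> u j"
proof (cases j)
  case (Suc j')
  show ?thesis
  proof (cases "u (Suc j') / u j' \<ge> 1")
    case True
    have step: "u n \<le> u (Suc n)" if "n < j" for n
      using order.trans [OF True ratio [of n j']] that pos [of n] Suc by (simp add: le_divide_eq)
    from \<open>i \<le> j\<close> have "u i \<le> u j"
      by (induction rule: dec_induct) (use step in \<open>auto intro: order.trans\<close>)
    then show ?thesis by simp
  next
    case False
    have step: "u (Suc n) \<le> u n" if "j \<le> n" for n
    proof -
      have "u (Suc n) / u n \<le> 1"
        using ratio [of j' n] False that Suc by simp
      then show ?thesis using pos [of n] by (simp add: divide_le_eq)
    qed
    from \<open>j \<le> k\<close> have "u k \<le> u j"
      by (induction rule: dec_induct) (use step in \<open>auto intro: order.trans\<close>)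
    then show ?thesis by simp
  qed
qed (use \<open>i \<le> j\<close> in simp)

lemma shifted_ratio_antimono:
  fixes L :: nat and nu :: real
  assumes "nu > -1" "m \<le> n"
  shows "(real n + L + 1) * (real n + L + nu + 1) / ((real n + 1) * (real n + 2 * L + nu + 1))
    \<le> (real m + L + 1) * (real m + L + nu + 1) / ((real m + 1) * (real m + 2 * L + nu + 1))"
proof -
  define D where "D k = (real k + 1) * (real k + 2 * L + nu + 1)" for k
  have D: "D k > 0" for k
    using assms(1) by (simp add: D_def add_pos_nonneg)
  have eq: "(real k + L + 1) * (real k + L + nu + 1) / D k = 1 + L * (L + nu) / D k" for k
    using D [of k] by (simp add: D_def field_simps)
  have "L * (L + nu) \<ge> 0"
    using assms(1) by (cases L) auto
  moreover have "D m \<le> D n"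
    using assms by (auto simp: D_def intro!: mult_mono)
  ultimately have "L * (L + nu) / D n \<le> L * (L + nu) / D m"
    using D by (intro divide_left_mono) auto
  then show ?thesis
    using eq [of m] eq [of n] by (simp add: D_def)
qed

lemma bessel_coeff_shift_ratio:
  assumes "a1 > 0" "a2 > 0" "nu2 > -1" "nu1 = nu2 + 2 * real l"
  shows "(bessel_coeff a1 nu1 (Suc k) / bessel_coeff a2 nu2 (Suc k + l))
      / (bessel_coeff a1 nu1 k / bessel_coeff a2 nu2 (k + l))
    = (a1 / a2)\<^sup>2 * ((real k + l + 1) * (real k + l + nu2 + 1)
        / ((real k + 1) * (real k + 2 * l + nu2 + 1)))"
proof -
  have "nu1 > -1" using assms by simp
  define d1 d2 where "d1 = (real k + 1) * (real k + 2 * l + nu2 + 1)"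
    and "d2 = (real k + l + 1) * (real k + l + nu2 + 1)"
  have "d1 > 0" "d2 > 0"
    using assms(3) by (simp_all add: d1_def d2_def add_pos_nonneg)
  have Suc1: "bessel_coeff a1 nu1 (Suc k) = bessel_coeff a1 nu1 k * (a1 / 2)\<^sup>2 / d1"
    using bessel_coeff_Suc [OF assms(1) \<open>nu1 > -1\<close>] by (simp add: d1_def assms(4) add_ac)
  have Suc2: "bessel_coeff a2 nu2 (Suc k + l) = bessel_coeff a2 nu2 (k + l) * (a2 / 2)\<^sup>2 / d2"
    using bessel_coeff_Suc [OF assms(2,3), of "k + l"] by (simp add: d2_def add_ac)
  have "bessel_coeff a1 nu1 k > 0" "bessel_coeff a2 nu2 (k + l) > 0"
    using bessel_coeff_pos assms \<open>nu1 > -1\<close> by auto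
  then show ?thesis
    unfolding Suc1 Suc2 d1_def [symmetric] d2_def [symmetric]
    using \<open>d1 > 0\<close> \<open>d2 > 0\<close> assms(1,2) by (simp add: power_divide field_simps)
qed

lemma shifted_difference_pos_between:
  fixes p q :: "nat \<Rightarrow> real" and l :: nat
  assumes p: "\<And>k. p k > 0" and q: "\<And>m. q m > 0" and "lam > 0"
    and ratio: "\<And>m n. m \<le> n \<Longrightarrow>
      (p (Suc n) / q (Suc n + l)) / (p n / q (n + l)) \<le> (p (Suc m) / q (Suc m + l)) / (p m / q (m + l))"
  defines "w m \<equiv> (if l \<le> m then p (m - l) else 0) - lam * q m"
  assumes "i \<le> j" "j \<le> k" "w i > 0" "w k > 0"
  shows "w j > 0"
proof -
  define u where "u m = p m / q (m + l)" for m
  have neg: "w m < 0" if "m < l" for m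
    using that \<open>lam > 0\<close> q [of m] by (simp add: w_def)
  have pos_iff: "w m > 0 \<longleftrightarrow> u (m - l) > lam" if "l \<le> m" for m
  proof -
    have "w m = q m * (u (m - l) - lam)"
      using that q [of m] by (simp add: w_def u_def field_simps)
    then show ?thesis using q [of m] by (simp add: zero_less_mult_iff)
  qed
  have "l \<le> i" "l \<le> k"
    using neg \<open>w i > 0\<close> \<open>w k > 0\<close> by (meson not_le order.asym)+
  then have "u (i - l) > lam" "u (k - l) > lam"
    using pos_iff \<open>w i > 0\<close> \<open>w k > 0\<close> by auto
  moreover have "min (u (i - l)) (u (k - l)) \<le> u (j - l)"
    using p q ratio \<open>i \<le> j\<close> \<open>j \<le> k\<close>
    by (intro min_le_if_ratio_antimono) (auto simp: u_def)
  ultimately show ?thesis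
    using pos_iff [of j] \<open>l \<le> i\<close> \<open>i \<le> j\<close> by simp
qed

lemma sums_shift_power:
  fixes c :: "nat \<Rightarrow> real"
  assumes "(\<lambda>k. c k * y ^ k) sums S"
  shows "(\<lambda>m. (if l \<le> m then c (m - l) else 0) * y ^ m) sums (y ^ l * S)"
proof -
  define g where "g = (\<lambda>m. (if l \<le> m then c (m - l) else 0) * y ^ m)"
  have "(\<lambda>k. g (k + l)) = (\<lambda>k. y ^ l * (c k * y ^ k))"
    by (simp add: g_def power_add mult_ac)
  then have "(\<lambda>k. g (k + l)) sums (y ^ l * S)"
    using sums_mult [OF assms] by simp
  moreover have "(\<Sum>m<l. g m) = 0"
    by (simp add: g_def)
  ultimately have "g sums (y ^ l * S)"
    using sums_iff_shift [of g l] by simp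
  then show ?thesis
    unfolding g_def .
qed

context
  fixes a1 a2 nu1 nu2 lam :: real and l :: nat
  assumes a1: "a1 > 0" and a2: "a2 > 0" and nu2: "nu2 > -1" and nu1: "nu1 = nu2 + 2 * real l"
    and lam: "lam > 0"
begin

definition bessel_difference :: "real \<Rightarrow> real" where
  "bessel_difference x = exp (- (x\<^sup>2 + a1\<^sup>2) / 2) * bessel_I nu1 (a1 * x)
    - lam * (exp (- (x\<^sup>2 + a2\<^sup>2) / 2) * bessel_I nu2 (a2 * x))"

definition bessel_difference_coeff :: "nat \<Rightarrow> real" where
  "bessel_difference_coeff m = (if l \<le> m then exp (- a1\<^sup>2 / 2) * bessel_coeff a1 nu1 (m - l) else 0)
    - lam * (exp (- a2\<^sup>2 / 2) * bessel_coeff a2 nu2 m)"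

lemma bessel_difference_coeff_pos_between:
  assumes "i \<le> j" "j \<le> k" "bessel_difference_coeff i > 0" "bessel_difference_coeff k > 0"
  shows "bessel_difference_coeff j > 0"
  using assms unfolding bessel_difference_coeff_def
proof (rule shifted_difference_pos_between [rotated 4])
  define p q where "p k = exp (- a1\<^sup>2 / 2) * bessel_coeff a1 nu1 k"
    and "q k = exp (- a2\<^sup>2 / 2) * bessel_coeff a2 nu2 k" for k
  show "p k > 0" "q k > 0" for k
    using a1 a2 nu2 nu1 by (simp_all add: p_def q_def bessel_coeff_pos)
  show "(p (Suc n) / q (Suc n + l)) / (p n / q (n + l)) \<le> (p (Suc m) / q (Suc m + l)) / (p m / q (m + l))"
    if "m \<le> n" for m n
  proof -
    have "(p (Suc k) / q (Suc k + l)) / (p k / q (k + l))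
        = (bessel_coeff a1 nu1 (Suc k) / bessel_coeff a2 nu2 (Suc k + l))
          / (bessel_coeff a1 nu1 k / bessel_coeff a2 nu2 (k + l))" for k
      by (simp add: p_def q_def)
    then show ?thesis
      unfolding bessel_coeff_shift_ratio [OF a1 a2 nu2 nu1]
      using mult_left_mono [OF shifted_ratio_antimono [OF nu2 that, of l], of "(a1 / a2)\<^sup>2"] by simp
  qed
qed (use lam in auto)

lemma bessel_difference_coeff_sums:
  "(\<lambda>m. bessel_difference_coeff m * y ^ m) sums
    (exp (- a1\<^sup>2 / 2) * (y ^ l * bessel_series a1 nu1 y) - lam * (exp (- a2\<^sup>2 / 2) * bessel_series a2 nu2 y))"
proof -
  have "(\<lambda>k. bessel_coeff a nu k * y ^ k) sums bessel_series a nu y" if "a > 0" "nu > -1" for a nu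
    unfolding bessel_series_def using summable_bessel_series [OF that] by (rule summable_sums)
  moreover have "bessel_difference_coeff m * y ^ m
      = exp (- a1\<^sup>2 / 2) * ((if l \<le> m then bessel_coeff a1 nu1 (m - l) else 0) * y ^ m)
        - lam * (exp (- a2\<^sup>2 / 2) * (bessel_coeff a2 nu2 m * y ^ m))" for m
    by (simp add: bessel_difference_coeff_def algebra_simps)
  ultimately show ?thesis
    using a1 a2 nu1 nu2 by (simp only:) (intro sums_diff sums_mult sums_shift_power; simp)
qed

lemma bessel_difference_eq:
  assumes "x > 0"
  shows "bessel_difference x = x powr nu2 * exp (- x\<^sup>2 / 2) * (\<Sum>m. bessel_difference_coeff m * (x\<^sup>2) ^ m)"
proof -
  have "nu1 > -1"
    using nu1 nu2 by simp
  have powr: "x powr nu1 = x powr nu2 * (x\<^sup>2) ^ l"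
    using assms powr_realpow [of x "2 * l"] by (simp add: nu1 powr_add power_mult)
  have exp: "exp (- (x\<^sup>2 + a\<^sup>2) / 2) = exp (- x\<^sup>2 / 2) * exp (- a\<^sup>2 / 2)" for a :: real
    by (simp add: exp_add [symmetric] field_simps)
  show ?thesis
    unfolding bessel_difference_def exp sums_unique [OF bessel_difference_coeff_sums, symmetric]
      bessel_I_scaled_eq [OF a1 \<open>nu1 > -1\<close> assms] bessel_I_scaled_eq [OF a2 nu2 assms] powr
    by (simp add: algebra_simps)
qed

lemma bessel_difference_pos_between:
  assumes x: "0 < x1" "x1 \<le> x" "x \<le> x2"
    and pos: "bessel_difference x1 > 0" "bessel_difference x2 > 0"
  shows "bessel_difference x > 0"
proof -
  let ?W = "\<lambda>y. \<Sum>m. bessel_difference_coeff m * y ^ m"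
  have pos_iff: "bessel_difference z > 0 \<longleftrightarrow> ?W (z\<^sup>2) > 0" if "z > 0" for z
  proof -
    have "z powr nu2 * exp (- z\<^sup>2 / 2) > 0"
      using that by simp
    then show ?thesis
      unfolding bessel_difference_eq [OF that] using zero_less_mult_pos mult_pos_pos by blast
  qed
  show ?thesis
  proof (cases "x = x1 \<or> x = x2")
    case False
    then have "x1\<^sup>2 < x\<^sup>2" "x\<^sup>2 < x2\<^sup>2"
      using x by (auto intro!: power_strict_mono)
    then have "?W (x\<^sup>2) > 0"
    proof (rule suminf_power_pos_between [rotated 3])
      show "summable (\<lambda>m. bessel_difference_coeff m * y ^ m)" for y
        using bessel_difference_coeff_sums by (rule sums_summable)
      show "bessel_difference_coeff j > 0"
        if "i \<le> j" "j \<le> k" "bessel_difference_coeff i > 0" "bessel_difference_coeff k > 0" for i j k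
        using that by (rule bessel_difference_coeff_pos_between)
      show "0 < x1\<^sup>2" "?W (x1\<^sup>2) > 0" "?W (x2\<^sup>2) > 0"
        using x pos pos_iff [of x1] pos_iff [of x2] by simp_all
    qed
    then show ?thesis
      using pos_iff [of x] x by simp
  qed (use pos in auto)
qed

end

section \<open>Unimodality\<close>

lemma quasiconcave_piecewise_mono:
  fixes f :: "real \<Rightarrow> real"
  assumes qc: "\<And>x y z. 0 < x \<Longrightarrow> x < y \<Longrightarrow> y < z \<Longrightarrow> min (f x) (f z) \<le> f y"
  obtains "\<And>r s. 0 < r \<Longrightarrow> r < s \<Longrightarrow> f r \<le> f s"
    | c where "\<And>r s. 0 < r \<Longrightarrow> r < s \<Longrightarrow> s < c \<Longrightarrow> f r \<le> f s"
      "\<And>s t. c < t \<Longrightarrow> t < s \<Longrightarrow> f s \<le> f t"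
proof -
  text \<open>\<open>D\<close> collects the points where \<open>f\<close> has dropped below an earlier value; \<open>f\<close> increases
    before \<open>Inf D\<close> and, by quasi-concavity, decreases after it.\<close>
  define D where "D = {z. 0 < z \<and> (\<exists>y. 0 < y \<and> y < z \<and> f z < f y)}"
  have increasing: "f r \<le> f s" if "0 < r" "r < s" "s \<notin> D" for r s
    using that by (force simp: D_def not_less)
  have decreasing: "f w' \<le> f w" if "z \<in> D" "z \<le> w" "w < w'" for z w w'
  proof -
    obtain y where y: "0 < y" "y < z" "f z < f y"
      using \<open>z \<in> D\<close> by (auto simp: D_def)
    have "f w \<le> f z"
      using qc [of y z w] y that by (cases "z = w") (auto simp: min_def split: if_splits)
    then show ?thesis
      using qc [of y w w'] y that by (auto simp: min_def split: if_splits)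
  qed
  show ?thesis
  proof (cases "D = {}")
    case True
    then show ?thesis using increasing that(1) by blast
  next
    case False
    have "bdd_below D"
      by (rule bdd_belowI [of _ 0]) (auto simp: D_def)
    show ?thesis
    proof (rule that(2) [of "Inf D"])
      show "f r \<le> f s" if "0 < r" "r < s" "s < Inf D" for r s
        using increasing [OF that(1,2)] cInf_lower [OF _ \<open>bdd_below D\<close>, of s] that by force
      show "f s \<le> f t" if "Inf D < t" "t < s" for s t
        using cInf_lessD [OF False that(1)] decreasing that(2) by force
    qed
  qed
qed

lemma isCont_lowerbound:
  fixes f :: "real \<Rightarrow> real"
  assumes "isCont f c" "F \<le> at c" "F \<noteq> bot" "eventually (\<lambda>t. A \<le> f t) F"
  shows "A \<le> f c"
  using tendsto_mono [OF assms(2)] assms(1) by (intro tendsto_lowerbound [OF _ assms(4,3)]) (simp add: isCont_def)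

lemma unimodal_on_if_quasiconcave:
  fixes f :: "real \<Rightarrow> real"
  assumes cont: "continuous_on {0<..} f"
    and qc: "\<And>x y z. 0 < x \<Longrightarrow> x < y \<Longrightarrow> y < z \<Longrightarrow> min (f x) (f z) \<le> f y"
  shows "unimodal_on {0<..} f"
proof (rule quasiconcave_piecewise_mono [OF qc])
  assume "\<And>r s. 0 < r \<Longrightarrow> r < s \<Longrightarrow> f r \<le> f s"
  then have "mono_on ({0<..} \<inter> {0..}) f"
    by (intro mono_onI) (fastforce simp: order_le_less)
  moreover have "antimono_on ({0<..} \<inter> {..0}) f"
    by (auto intro: monotone_onI)
  ultimately show ?thesis
    unfolding unimodal_on_def by blast
next
  fix c :: real
  assume left: "\<And>r s. 0 < r \<Longrightarrow> r < s \<Longrightarrow> s < c \<Longrightarrow> f r \<le> f s"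
    and right: "\<And>s t. c < t \<Longrightarrow> t < s \<Longrightarrow> f s \<le> f t"
  have cont_at: "isCont f x" if "x > 0" for x
    using cont that by (simp add: continuous_on_eq_continuous_at)
  have left_c: "f r \<le> f c" if "0 < r" "r < c" for r
    using eventually_at_left_real [OF \<open>r < c\<close>] that
    by (intro isCont_lowerbound [OF cont_at, of _ "at_left c"])
      (auto elim!: eventually_mono intro: left at_le)
  have right_c: "f s \<le> f c" if "0 < c" "c < s" for s
    using eventually_at_right_real [OF \<open>c < s\<close>] that
    by (intro isCont_lowerbound [OF cont_at, of _ "at_right c"])
      (auto elim!: eventually_mono intro: right at_le)
  have "mono_on ({0<..} \<inter> {..c}) f"
    using left left_c by (intro mono_onI) (fastforce simp: order_le_less)
  moreover have "antimono_on ({0<..} \<inter> {c..}) f"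
    using right right_c by (intro monotone_onI) (fastforce simp: order_le_less)
  ultimately show ?thesis
    unfolding unimodal_on_def by blast
qed

lemma nuttall_Q_ratio_quasiconcave:
  fixes l :: nat
  assumes "b \<ge> 0" "a1 > 0" "a2 > 0" "nu2 > -1" "nu1 = nu2 + 2 * real l"
    and mu: "mu1 + nu2 > -1" "mu1 < mu2" "mu2 < mu3"
  defines "R mu \<equiv> nuttall_Q mu nu1 a1 b / nuttall_Q mu nu2 a2 b"
  shows "min (R mu1) (R mu3) \<le> R mu2"
proof (rule ccontr)
  assume "\<not> ?thesis"
  then have less: "R mu2 < R mu1" "R mu2 < R mu3" by auto
  define F G where "F mu = nuttall_Q mu nu1 a1 b" and "G mu = nuttall_Q mu nu2 a2 b" for mu
  have "nu1 > -1" using assms by simp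
  have admissible: "mu + nu1 > -1" "mu + nu2 > -1" if "mu \<in> {mu1, mu2, mu3}" for mu
    using that mu assms(5) by auto
  have FG_pos: "F mu > 0" "G mu > 0" if "mu \<in> {mu1, mu2, mu3}" for mu
    using nuttall_Q_pos admissible [OF that] assms \<open>nu1 > -1\<close> by (simp_all add: F_def G_def)
  define lam where "lam = R mu2"
  have "lam > 0"
    using FG_pos [of mu2] by (simp add: lam_def R_def F_def G_def)
  define V where "V = bessel_difference a1 a2 nu1 nu2 lam"
  have V_eq: "x powr mu * V x = nuttall_integrand mu nu1 a1 x - lam * nuttall_integrand mu nu2 a2 x" for mu x
    using assms(2-5) \<open>lam > 0\<close>
    by (simp add: V_def bessel_difference_def nuttall_integrand_def algebra_simps)
  have int: "set_integrable lborel {b..} (nuttall_integrand mu nu a)"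
    if "mu \<in> {mu1, mu2, mu3}" "(nu, a) \<in> {(nu1, a1), (nu2, a2)}" for mu nu a
    using that admissible [OF that(1)] set_integrable_nuttall_integrand assms \<open>nu1 > -1\<close> by auto
  have V_int: "set_integrable lborel {b..} (\<lambda>x. x powr mu * V x)" if "mu \<in> {mu1, mu2, mu3}" for mu
    unfolding V_eq using int [OF that] by (intro set_integral_diff set_integrable_mult_right) auto
  have V_integral: "(LINT x:{b..}|lborel. x powr mu * V x) = F mu - lam * G mu" if "mu \<in> {mu1, mu2, mu3}" for mu
    unfolding V_eq F_def G_def nuttall_Q_eq_integral using int [OF that]
    by (simp add: set_integral_diff set_integrable_mult_right)
  have "F mu - lam * G mu > 0" if "mu \<in> {mu1, mu3}" for mu
    using less FG_pos [of mu] that by (auto simp: lam_def R_def F_def G_def field_simps)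
  then have "(LINT x:{b..}|lborel. x powr mu2 * V x) > 0"
    using V_int V_integral bessel_difference_pos_between [OF assms(2-5) \<open>lam > 0\<close>]
    by (intro set_integral_powr_pos_between [OF \<open>b \<ge> 0\<close> _ _ mu(2,3)]) (auto simp: V_def)
  moreover have "F mu2 - lam * G mu2 = 0"
    using FG_pos [of mu2] by (simp add: lam_def R_def F_def G_def)
  ultimately show False
    using V_integral [of mu2] by simp
qed

theorem theorem6:
  fixes b nu1 nu2 a1 a2 :: real and l :: nat
  assumes "b \<ge> 0" and "nu1 > -1" and "nu2 > -1"
    and "l > 0" and "nu1 - nu2 = 2 * real l"
    and "0 < a1" and "a1 \<le> a2"
  shows "unimodal_on {0<..} (\<lambda>mu. nuttall_Q mu nu1 a1 b / nuttall_Q mu nu2 a2 b)"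
proof (rule unimodal_on_if_quasiconcave)
  text \<open>Of the hypotheses \<open>l > 0\<close> and \<open>a1 \<le> a2\<close> the argument only needs \<open>a2 > 0\<close>.\<close>
  have "a2 > 0" using assms by simp
  have "{0<..} \<subseteq> {-(nu + 1)<..}" if "nu > -1" for nu :: real
    using that by auto
  moreover have "nuttall_Q mu nu2 a2 b \<noteq> 0" if "mu \<in> {0<..}" for mu
    using nuttall_Q_pos [of a2 nu2 mu b] that assms \<open>a2 > 0\<close> by simp
  ultimately show "continuous_on {0<..} (\<lambda>mu. nuttall_Q mu nu1 a1 b / nuttall_Q mu nu2 a2 b)"
    using assms \<open>a2 > 0\<close>
    by (intro continuous_on_divide continuous_on_subset [OF continuous_on_nuttall_Q]) auto
  show "min (nuttall_Q x nu1 a1 b / nuttall_Q x nu2 a2 b) (nuttall_Q z nu1 a1 b / nuttall_Q z nu2 a2 b)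
      \<le> nuttall_Q y nu1 a1 b / nuttall_Q y nu2 a2 b" if "0 < x" "x < y" "y < z" for x y z
    using that assms \<open>a2 > 0\<close> by (intro nuttall_Q_ratio_quasiconcave [where l = l]) auto
qed

end
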